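(* Let $\mathcal{X}$ be a finite set, $\pi$ a probability mass function on $\mathcal{X}$ with full support, and fix a group action of $\mathcal{G}$ on $\mathcal{X}$ with associated Gibbs, Metropolis–Hastings and Barker orbit kernels $G$, $M$, $B$. Let $\mathbf{G}=\{P\in\mathcal{S}(\pi):GPG=P\}$, $\mathbf{M}=\{P\in\mathcal{S}(\pi):MPM=P\}$, $\mathbf{B}=\{P\in\mathcal{S}(\pi):BPB=P\}$. If each orbit block of $G$, $M$ and $B$ is aperiodic, then $\mathbf{G}=\mathbf{M}=\mathbf{B}$.
   Context: $\mathcal{S}(\pi)$ is the set of transition matrices $P$ on $\mathcal{X}$ with $\pi P=\pi$. With $\mathcal{O}(x)$ the orbit of $x$: $G(x,y)=\pi(y)/\pi(\mathcal{O}(x))$ for $y\in\mathcal{O}(x)$, else $0$; $M(x,y)=\frac{1}{|\mathcal{O}(x)|-1}\min\{1,\pi(y)/\pi(x)\}$ for $y\in\mathcal{O}(x)\setminus\{x\}$, $0$ off the orbit, $M(x,x)=1-\sum_{y\ne x}M(x,y)$; $B$ is the same with acceptance $\pi(y)/(\pi(x)+\pi(y))$. These kernels are block diagonal with one block per orbit; aperiodicity of a block refers to the Markov chain on that orbit given by the block. *)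

theory Defs
  imports Complex_Main "HOL-Algebra.Group_Action"
begin

text \<open>Matrices on a finite state set X are represented as extensional
  functions 'a => 'a => real, vanishing outside X x X.\<close>

definition mat_mult :: "'a set \<Rightarrow> ('a \<Rightarrow> 'a \<Rightarrow> real) \<Rightarrow> ('a \<Rightarrow> 'a \<Rightarrow> real) \<Rightarrow> ('a \<Rightarrow> 'a \<Rightarrow> real)" where
  "mat_mult X P Q = (\<lambda>x y. if x \<in> X \<and> y \<in> X then (\<Sum>z\<in>X. P x z * Q z y) else 0)"

definition stationary_kernels :: "'a set \<Rightarrow> ('a \<Rightarrow> real) \<Rightarrow> ('a \<Rightarrow> 'a \<Rightarrow> real) set" where
  "stationary_kernels X \<pi> = {P.
     (\<forall>x y. (x \<notin> X \<or> y \<notin> X) \<longrightarrow> P x y = 0) \<and>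
     (\<forall>x\<in>X. \<forall>y\<in>X. 0 \<le> P x y) \<and>
     (\<forall>x\<in>X. (\<Sum>y\<in>X. P x y) = 1) \<and>
     (\<forall>y\<in>X. (\<Sum>x\<in>X. \<pi> x * P x y) = \<pi> y)}"

definition gibbs_kernel :: "('g, 'b) monoid_scheme \<Rightarrow> ('g \<Rightarrow> 'a \<Rightarrow> 'a) \<Rightarrow> 'a set \<Rightarrow> ('a \<Rightarrow> real) \<Rightarrow> 'a \<Rightarrow> 'a \<Rightarrow> real" where
  "gibbs_kernel Gr \<phi> X \<pi> x y =
     (if x \<in> X \<and> y \<in> X \<and> y \<in> orbit Gr \<phi> x
      then \<pi> y / (\<Sum>z\<in>orbit Gr \<phi> x. \<pi> z) else 0)"

text \<open>Generic orbit kernel with acceptance function acc (off-diagonal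
  proposal uniform on the orbit minus the current point).\<close>
definition orbit_kernel :: "('g, 'b) monoid_scheme \<Rightarrow> ('g \<Rightarrow> 'a \<Rightarrow> 'a) \<Rightarrow> 'a set \<Rightarrow> ('a \<Rightarrow> 'a \<Rightarrow> real) \<Rightarrow> 'a \<Rightarrow> 'a \<Rightarrow> real" where
  "orbit_kernel Gr \<phi> X acc x y =
     (if x \<in> X \<and> y \<in> X then
        (if y = x then
           1 - (\<Sum>z\<in>orbit Gr \<phi> x - {x}. acc x z / (real (card (orbit Gr \<phi> x)) - 1))
         else if y \<in> orbit Gr \<phi> x then acc x y / (real (card (orbit Gr \<phi> x)) - 1)
         else 0)
      else 0)"

definition mh_kernel :: "('g, 'b) monoid_scheme \<Rightarrow> ('g \<Rightarrow> 'a \<Rightarrow> 'a) \<Rightarrow> 'a set \<Rightarrow> ('a \<Rightarrow> real) \<Rightarrow> 'a \<Rightarrow> 'a \<Rightarrow> real" where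
  "mh_kernel Gr \<phi> X \<pi> = orbit_kernel Gr \<phi> X (\<lambda>x y. min 1 (\<pi> y / \<pi> x))"

definition barker_kernel :: "('g, 'b) monoid_scheme \<Rightarrow> ('g \<Rightarrow> 'a \<Rightarrow> 'a) \<Rightarrow> 'a set \<Rightarrow> ('a \<Rightarrow> real) \<Rightarrow> 'a \<Rightarrow> 'a \<Rightarrow> real" where
  "barker_kernel Gr \<phi> X \<pi> = orbit_kernel Gr \<phi> X (\<lambda>x y. \<pi> y / (\<pi> x + \<pi> y))"

fun block_pow :: "'a set \<Rightarrow> ('a \<Rightarrow> 'a \<Rightarrow> real) \<Rightarrow> nat \<Rightarrow> 'a \<Rightarrow> 'a \<Rightarrow> real" where
  "block_pow Ob K 0 x y = (if x = y then 1 else 0)"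
| "block_pow Ob K (Suc n) x y = (\<Sum>z\<in>Ob. block_pow Ob K n x z * K z y)"

definition aperiodic_block :: "'a set \<Rightarrow> ('a \<Rightarrow> 'a \<Rightarrow> real) \<Rightarrow> bool" where
  "aperiodic_block Ob K \<longleftrightarrow>
     (\<forall>x\<in>Ob. Gcd {n::nat. n \<ge> 1 \<and> block_pow Ob K n x x > 0} = 1)"

definition invariant_set :: "'a set \<Rightarrow> ('a \<Rightarrow> real) \<Rightarrow> ('a \<Rightarrow> 'a \<Rightarrow> real) \<Rightarrow> ('a \<Rightarrow> 'a \<Rightarrow> real) set" where
  "invariant_set X \<pi> K = {P \<in> stationary_kernels X \<pi>. mat_mult X (mat_mult X K P) K = P}"

end

theory Submission
  imports Defs
begin

text \<open>Let \<open>K\<close> be a kernel that is reversible with respect to \<open>\<pi>\<close>, block diagonal along the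
  orbits, and such that within an orbit every point reaches every other one in exactly two steps.
  Then the fixed points \<open>P = K P K\<close> in \<open>S(\<pi>)\<close> are exactly those \<open>P\<close> for which
  \<open>P x y / \<pi> y\<close> depends only on the orbits of \<open>x\<close> and \<open>y\<close>, a description that does not
  mention \<open>K\<close>. By reversibility, \<open>K P K = P\<close> says that \<open>R x y = P x y / \<pi> y\<close> satisfies
  \<open>R x y = (\<Sum>a b. K x a * K y b * R a b)\<close>, so a maximum of \<open>R\<close> on a product of two orbits
  propagates to the one-step successors, hence to the two-step successors, i.e.\ to the whole
  product; the converse is a direct computation. The Gibbs, Metropolis-Hastings and Barker kernels
  are positive off the diagonal of each orbit block, so the two-step property can only fail on a
  two-point orbit with zero diagonal, which is periodic.\<close>

locale orbit_blocks =
  fixes X :: "'a set" and Orb :: "'a \<Rightarrow> 'a set"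
  assumes finite_states: "finite X"
    and orbit_self: "x \<in> X \<Longrightarrow> x \<in> Orb x"
    and orbit_subset: "x \<in> X \<Longrightarrow> Orb x \<subseteq> X"
    and orbit_eq: "x \<in> X \<Longrightarrow> y \<in> Orb x \<Longrightarrow> Orb y = Orb x"
begin

lemma orbit_sym: "x \<in> X \<Longrightarrow> y \<in> Orb x \<Longrightarrow> x \<in> Orb y"
  using orbit_eq orbit_self by blast

lemma orbit_member: "x \<in> X \<Longrightarrow> y \<in> Orb x \<Longrightarrow> y \<in> X"
  using orbit_subset by blast

lemma finite_orbit: "x \<in> X \<Longrightarrow> finite (Orb x)"
  using finite_states orbit_subset finite_subset by blast

end

lemma group_action_orbit_blocks:
  assumes "group_action Gr X \<phi>" and "finite X"
  shows "orbit_blocks X (orbit Gr \<phi>)"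
proof -
  interpret group_action Gr X \<phi> by (fact assms(1))
  have subset: "orbit Gr \<phi> x \<subseteq> X" if "x \<in> X" for x
    using element_image that unfolding orbit_def by blast
  have eq: "orbit Gr \<phi> y = orbit Gr \<phi> x" if x: "x \<in> X" and y: "y \<in> orbit Gr \<phi> x" for x y
  proof -
    have yX: "y \<in> X" using subset x y by blast
    have x_y: "x \<in> orbit Gr \<phi> y" using orbit_sym[OF x yX y] .
    show ?thesis
    proof
      show "orbit Gr \<phi> y \<subseteq> orbit Gr \<phi> x"
        using orbit_trans[OF x yX _ y] subset[OF yX] by blast
      show "orbit Gr \<phi> x \<subseteq> orbit Gr \<phi> y"
        using orbit_trans[OF yX x _ x_y] subset[OF x] by blast
    qed
  qed
  show ?thesis
    by unfold_locales (use assms(2) orbit_refl subset eq in blast)+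
qed

lemma block_pow_parity_if_zero_diagonal:
  assumes "K x x = 0" and "K y y = 0"
    and "a \<in> {x, y}" and "block_pow {x, y} K n x a \<noteq> 0"
  shows "even n \<longleftrightarrow> a = x"
  using assms(3,4)
proof (induction n arbitrary: a)
  case 0
  then show ?case by (simp split: if_splits)
next
  case (Suc n)
  have "(\<Sum>z\<in>{x, y}. block_pow {x, y} K n x z * K z a) \<noteq> 0"
    using Suc.prems(2) by simp
  then obtain z where z: "z \<in> {x, y}" and "block_pow {x, y} K n x z \<noteq> 0" and "K z a \<noteq> 0"
    by (rule sum.not_neutral_contains_not_neutral) simp
  then have parity: "even n \<longleftrightarrow> z = x" and "z \<noteq> a"
    using Suc.IH assms(1,2) by auto
  then have "a = x \<longleftrightarrow> z \<noteq> x"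
    using z Suc.prems(1) by blast
  with parity show ?case by simp
qed

lemma zero_diagonal_not_aperiodic:
  assumes "K x x = 0" and "K y y = 0"
  shows "\<not> aperiodic_block {x, y} K"
proof
  assume "aperiodic_block {x, y} K"
  then have "Gcd {n. n \<ge> 1 \<and> block_pow {x, y} K n x x > 0} = 1"
    unfolding aperiodic_block_def by blast
  moreover have "2 dvd Gcd {n. n \<ge> 1 \<and> block_pow {x, y} K n x x > 0}"
    using block_pow_parity_if_zero_diagonal[where K = K and x = x and y = y and a = x, OF assms]
    by (intro Gcd_greatest) auto
  ultimately show False by simp
qed

lemma aperiodic_two_step_path:
  assumes nonneg: "\<And>u v. u \<in> B \<Longrightarrow> v \<in> B \<Longrightarrow> 0 \<le> K u v"
    and off_diagonal: "\<And>u v. u \<in> B \<Longrightarrow> v \<in> B \<Longrightarrow> u \<noteq> v \<Longrightarrow> 0 < K u v"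
    and aperiodic: "aperiodic_block B K"
    and x: "x \<in> B" and y: "y \<in> B"
  shows "\<exists>z. 0 < K x z \<and> 0 < K z y"
proof (cases "B = {x, y}")
  case True
  have "K x x \<noteq> 0 \<or> K y y \<noteq> 0"
    using aperiodic zero_diagonal_not_aperiodic[of K x y] True by auto
  then obtain z where z: "z \<in> {x, y}" and "K z z \<noteq> 0" by blast
  have "K x z \<noteq> 0"
    using off_diagonal[of x z] \<open>K z z \<noteq> 0\<close> x z True by (cases "x = z") auto
  moreover have "K z y \<noteq> 0"
    using off_diagonal[of z y] \<open>K z z \<noteq> 0\<close> y z True by (cases "z = y") auto
  ultimately show ?thesis
    using nonneg[of x z] nonneg[of z y] x y z True by (auto simp: less_le)
next
  case False
  then obtain z where "z \<in> B" "z \<noteq> x" "z \<noteq> y" using x y by blast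
  then have "0 < K x z" and "0 < K z y"
    using off_diagonal x y by auto
  then show ?thesis by blast
qed

definition proportional_on_orbits ::
  "'a set \<Rightarrow> ('a \<Rightarrow> 'a set) \<Rightarrow> ('a \<Rightarrow> real) \<Rightarrow> ('a \<Rightarrow> 'a \<Rightarrow> real) \<Rightarrow> bool" where
  "proportional_on_orbits X Orb \<pi> P \<longleftrightarrow>
     (\<forall>x\<in>X. \<forall>y\<in>X. \<forall>a\<in>Orb x. \<forall>b\<in>Orb y. P a b / \<pi> b = P x y / \<pi> y)"

locale reversible_block_kernel = orbit_blocks X Orb
  for X :: "'a set" and Orb +
  fixes \<pi> :: "'a \<Rightarrow> real" and K :: "'a \<Rightarrow> 'a \<Rightarrow> real"
  assumes pi_pos: "x \<in> X \<Longrightarrow> 0 < \<pi> x"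
    and kernel_support: "K x y \<noteq> 0 \<Longrightarrow> x \<in> X \<and> y \<in> Orb x"
    and kernel_nonneg: "0 \<le> K x y"
    and row_sum: "x \<in> X \<Longrightarrow> (\<Sum>y\<in>X. K x y) = 1"
    and reversible: "\<pi> x * K x y = \<pi> y * K y x"
    and two_step_path: "x \<in> X \<Longrightarrow> y \<in> Orb x \<Longrightarrow> \<exists>z. 0 < K x z \<and> 0 < K z y"
begin

lemma fixed_point_ratio_harmonic:
  assumes fixed: "mat_mult X (mat_mult X K P) K = P" and x: "x \<in> X" and y: "y \<in> X"
  shows "P x y / \<pi> y = (\<Sum>a\<in>X. \<Sum>b\<in>X. K x a * K y b * (P a b / \<pi> b))"
proof -
  have "(\<Sum>a\<in>X. \<Sum>b\<in>X. K x a * K y b * (P a b / \<pi> b))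
      = (\<Sum>a\<in>X. \<Sum>b\<in>X. K x a * P a b * K b y / \<pi> y)"
  proof (intro sum.cong refl)
    fix a b assume "b \<in> X"
    then have "\<pi> b > 0" and "\<pi> y > 0" using pi_pos y by auto
    then show "K x a * K y b * (P a b / \<pi> b) = K x a * P a b * K b y / \<pi> y"
      using reversible[of b y] by (simp add: field_simps)
  qed
  also have "\<dots> = (\<Sum>b\<in>X. (\<Sum>a\<in>X. K x a * P a b) * K b y) / \<pi> y"
    by (subst sum.swap) (simp add: sum_divide_distrib sum_distrib_right)
  also have "\<dots> = mat_mult X (mat_mult X K P) K x y / \<pi> y"
    using x y by (simp add: mat_mult_def)
  finally show ?thesis using fixed by simp
qed

lemma fixed_point_ratio_max_spreads:
  assumes fixed: "mat_mult X (mat_mult X K P) K = P" and x: "x \<in> X" and y: "y \<in> X"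
    and max: "\<And>a b. a \<in> Orb x \<Longrightarrow> b \<in> Orb y \<Longrightarrow> P a b / \<pi> b \<le> P x y / \<pi> y"
    and a: "0 < K x a" and b: "0 < K y b"
  shows "P a b / \<pi> b = P x y / \<pi> y"
proof -
  define R where "R a b = P a b / \<pi> b" for a b
  define w where "w a b = K x a * K y b" for a b
  have total: "(\<Sum>a\<in>X. \<Sum>b\<in>X. w a b) = 1"
    using row_sum x y by (simp add: w_def sum_product[symmetric])
  have "(\<Sum>(a, b)\<in>X \<times> X. w a b * (R x y - R a b))
      = (\<Sum>a\<in>X. \<Sum>b\<in>X. w a b) * R x y - (\<Sum>a\<in>X. \<Sum>b\<in>X. w a b * R a b)"
    by (simp add: sum.cartesian_product[symmetric] right_diff_distrib sum_subtractf sum_distrib_right)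
  also have "\<dots> = 0"
    using total fixed_point_ratio_harmonic[OF fixed x y] by (simp add: R_def w_def)
  finally have sum_zero: "(\<Sum>(a, b)\<in>X \<times> X. w a b * (R x y - R a b)) = 0" .
  have "0 \<le> w a b * (R x y - R a b)" for a b
  proof (cases "w a b = 0")
    case False
    then have "a \<in> Orb x" and "b \<in> Orb y"
      using kernel_support unfolding w_def by auto
    then show ?thesis
      using max kernel_nonneg unfolding R_def w_def by simp
  qed simp
  moreover have "(a, b) \<in> X \<times> X"
    using kernel_support[of x a] kernel_support[of y b] a b x y orbit_member by auto
  ultimately have "w a b * (R x y - R a b) = 0"
    using sum_zero finite_states
    by (subst (asm) sum_nonneg_eq_0_iff) auto
  moreover have "0 < w a b" using a b unfolding w_def by simp
  ultimately show ?thesis unfolding R_def by simp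
qed

lemma fixed_point_ratio_constant_on_orbits:
  assumes fixed: "mat_mult X (mat_mult X K P) K = P" and x0: "x0 \<in> X" and y0: "y0 \<in> X"
    and a: "a \<in> Orb x0" and b: "b \<in> Orb y0"
  shows "P a b / \<pi> b = P x0 y0 / \<pi> y0"
proof -
  define R where "R a b = P a b / \<pi> b" for a b
  define B where "B = Orb x0 \<times> Orb y0"
  have fin: "finite B" and nonempty: "B \<noteq> {}"
    using finite_orbit orbit_self x0 y0 unfolding B_def by auto
  have "Max ((\<lambda>(a, b). R a b) ` B) \<in> (\<lambda>(a, b). R a b) ` B"
    using fin nonempty by (intro Max_in) auto
  then obtain x y where "(x, y) \<in> B" and xy_Max: "R x y = Max ((\<lambda>(a, b). R a b) ` B)"
    by auto
  then have xy: "x \<in> Orb x0" "y \<in> Orb y0" unfolding B_def by auto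
  have max: "R a b \<le> R x y" if "a \<in> Orb x0" "b \<in> Orb y0" for a b
    unfolding xy_Max using fin that unfolding B_def by (intro Max_ge) force+
  have x: "x \<in> X" and Ox: "Orb x = Orb x0" and y: "y \<in> X" and Oy: "Orb y = Orb y0"
    using orbit_member[OF x0 xy(1)] orbit_eq[OF x0 xy(1)]
      orbit_member[OF y0 xy(2)] orbit_eq[OF y0 xy(2)] by simp_all
  have "R c d = R x y" if c: "c \<in> Orb x0" and d: "d \<in> Orb y0" for c d
  proof -
    obtain u where xu: "0 < K x u" and uc: "0 < K u c"
      using two_step_path[OF x] c Ox by auto
    obtain v where yv: "0 < K y v" and vd: "0 < K v d"
      using two_step_path[OF y] d Oy by auto
    have u0: "u \<in> Orb x0" and v0: "v \<in> Orb y0"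
      using kernel_support[of x u] kernel_support[of y v] xu yv Ox Oy by auto
    have u: "u \<in> X" "Orb u = Orb x0" and v: "v \<in> X" "Orb v = Orb y0"
      using orbit_member[OF x0 u0] orbit_eq[OF x0 u0] orbit_member[OF y0 v0] orbit_eq[OF y0 v0]
      by simp_all
    have uv: "R u v = R x y"
      using fixed_point_ratio_max_spreads[OF fixed x y _ xu yv] max Ox Oy unfolding R_def by simp
    then have "R c d = R u v"
      using fixed_point_ratio_max_spreads[OF fixed u(1) v(1) _ uc vd] max u v unfolding R_def by simp
    with uv show ?thesis by simp
  qed
  then show ?thesis
    using a b orbit_self x0 y0 unfolding R_def by metis
qed

lemma proportional_imp_fixed_point:
  assumes proportional: "proportional_on_orbits X Orb \<pi> P"
    and outside: "\<And>x y. x \<notin> X \<or> y \<notin> X \<Longrightarrow> P x y = 0"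
  shows "mat_mult X (mat_mult X K P) K = P"
proof (intro ext)
  fix x y
  show "mat_mult X (mat_mult X K P) K x y = P x y"
  proof (cases "x \<in> X \<and> y \<in> X")
    case False
    then show ?thesis using outside by (auto simp: mat_mult_def)
  next
    case True
    then have x: "x \<in> X" and y: "y \<in> X" by auto
    have summand: "K x a * P a b * K b y = K x a * K y b * P x y" if b: "b \<in> X" for a b
    proof (cases "K x a = 0 \<or> K b y = 0")
      case True
      moreover have "K b y = 0 \<Longrightarrow> K y b = 0"
        using reversible[of b y] pi_pos[OF y] by simp
      ultimately show ?thesis by auto
    next
      case False
      then have "a \<in> Orb x" and "b \<in> Orb y"
        using kernel_support[of x a] kernel_support[of b y] orbit_sym b by auto
      then have "P a b / \<pi> b = P x y / \<pi> y"
        using proportional x y unfolding proportional_on_orbits_def by blast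
      then have "K b y * P a b = (\<pi> b * K b y) * P x y / \<pi> y"
        using pi_pos[OF b] by (simp add: field_simps)
      also have "\<dots> = K y b * P x y"
        using reversible[of b y] pi_pos[OF y] by simp
      finally have "K b y * P a b = K y b * P x y" .
      then show ?thesis by (metis mult.assoc mult.commute)
    qed
    have "mat_mult X (mat_mult X K P) K x y = (\<Sum>b\<in>X. \<Sum>a\<in>X. K x a * P a b * K b y)"
      using x y by (simp add: mat_mult_def sum_distrib_right)
    also have "\<dots> = (\<Sum>b\<in>X. \<Sum>a\<in>X. K x a * K y b * P x y)"
      by (intro sum.cong refl) (erule summand)
    also have "\<dots> = (\<Sum>a\<in>X. K x a) * (\<Sum>b\<in>X. K y b) * P x y"
      by (simp add: sum_distrib_left sum_distrib_right mult.assoc)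
    also have "\<dots> = P x y" using row_sum x y by simp
    finally show ?thesis .
  qed
qed

theorem invariant_set_eq_proportional:
  "invariant_set X \<pi> K = {P \<in> stationary_kernels X \<pi>. proportional_on_orbits X Orb \<pi> P}"
proof -
  have "proportional_on_orbits X Orb \<pi> P" if "mat_mult X (mat_mult X K P) K = P" for P
    using fixed_point_ratio_constant_on_orbits[OF that]
    unfolding proportional_on_orbits_def by blast
  moreover have "mat_mult X (mat_mult X K P) K = P"
    if "P \<in> stationary_kernels X \<pi>" "proportional_on_orbits X Orb \<pi> P" for P
    using that proportional_imp_fixed_point unfolding stationary_kernels_def by blast
  ultimately show ?thesis unfolding invariant_set_def by blast
qed

end

lemma (in orbit_blocks) reversible_block_kernelI:
  assumes "\<And>x. x \<in> X \<Longrightarrow> 0 < \<pi> x"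
    and support: "\<And>x y. K x y \<noteq> 0 \<Longrightarrow> x \<in> X \<and> y \<in> Orb x"
    and nonneg: "\<And>x y. 0 \<le> K x y"
    and "\<And>x. x \<in> X \<Longrightarrow> (\<Sum>y\<in>X. K x y) = 1"
    and "\<And>x y. \<pi> x * K x y = \<pi> y * K y x"
    and off_diagonal: "\<And>x y. x \<in> X \<Longrightarrow> y \<in> Orb x \<Longrightarrow> y \<noteq> x \<Longrightarrow> 0 < K x y"
    and aperiodic: "\<And>x. x \<in> X \<Longrightarrow> aperiodic_block (Orb x) K"
  shows "reversible_block_kernel X Orb \<pi> K"
proof unfold_locales
  fix x y assume x: "x \<in> X" and y: "y \<in> Orb x"
  have "0 < K u v" if u: "u \<in> Orb x" and "v \<in> Orb x" "u \<noteq> v" for u v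
    using off_diagonal[OF orbit_member[OF x u]] orbit_eq[OF x u] that by simp
  then show "\<exists>z. 0 < K x z \<and> 0 < K z y"
    using aperiodic_two_step_path[OF nonneg _ aperiodic[OF x] orbit_self[OF x] y] by blast
qed (use assms in auto)

context
  fixes Gr :: "('g, 'b) monoid_scheme" and \<phi> :: "'g \<Rightarrow> 'a \<Rightarrow> 'a" and X :: "'a set"
  assumes blocks: "orbit_blocks X (orbit Gr \<phi>)"
begin

interpretation orbit_blocks X "orbit Gr \<phi>" by (fact blocks)

lemma gibbs_reversible_block_kernel:
  assumes pi_pos: "\<And>x. x \<in> X \<Longrightarrow> 0 < \<pi> x"
    and aperiodic: "\<And>x. x \<in> X \<Longrightarrow> aperiodic_block (orbit Gr \<phi> x) (gibbs_kernel Gr \<phi> X \<pi>)"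
  shows "reversible_block_kernel X (orbit Gr \<phi>) \<pi> (gibbs_kernel Gr \<phi> X \<pi>)"
proof -
  define Z where "Z x = (\<Sum>z\<in>orbit Gr \<phi> x. \<pi> z)" for x
  have gibbs: "gibbs_kernel Gr \<phi> X \<pi> x y =
      (if x \<in> X \<and> y \<in> X \<and> y \<in> orbit Gr \<phi> x then \<pi> y / Z x else 0)" for x y
    unfolding gibbs_kernel_def Z_def ..
  have Z_pos: "0 < Z x" if x: "x \<in> X" for x
    unfolding Z_def
    using finite_orbit[OF x] orbit_self[OF x] pi_pos orbit_member[OF x] by (intro sum_pos) auto
  have Z_eq: "Z y = Z x" if "x \<in> X" "y \<in> orbit Gr \<phi> x" for x y
    unfolding Z_def using orbit_eq[OF that] by simp
  show ?thesis
  proof (rule reversible_block_kernelI)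
    fix x y
    show "gibbs_kernel Gr \<phi> X \<pi> x y \<noteq> 0 \<Longrightarrow> x \<in> X \<and> y \<in> orbit Gr \<phi> x"
      by (simp add: gibbs split: if_splits)
    show "0 \<le> gibbs_kernel Gr \<phi> X \<pi> x y"
      using pi_pos[of y] Z_pos[of x] by (simp add: gibbs less_imp_le)
    show "\<pi> x * gibbs_kernel Gr \<phi> X \<pi> x y = \<pi> y * gibbs_kernel Gr \<phi> X \<pi> y x"
    proof (cases "x \<in> X \<and> y \<in> orbit Gr \<phi> x")
      case True
      then have "y \<in> X" "x \<in> orbit Gr \<phi> y" "Z y = Z x"
        using orbit_member orbit_sym Z_eq by blast+
      then show ?thesis using True by (simp add: gibbs)
    next
      case False
      then have "\<not> (y \<in> X \<and> x \<in> orbit Gr \<phi> y)"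
        using orbit_sym orbit_member by blast
      then show ?thesis using False by (auto simp: gibbs)
    qed
  next
    fix x assume x: "x \<in> X"
    have "(\<Sum>y\<in>X. gibbs_kernel Gr \<phi> X \<pi> x y) = (\<Sum>y\<in>{y \<in> X. y \<in> orbit Gr \<phi> x}. \<pi> y / Z x)"
      using x finite_states by (simp add: gibbs sum.inter_filter)
    also have "{y \<in> X. y \<in> orbit Gr \<phi> x} = orbit Gr \<phi> x"
      using orbit_subset[OF x] by blast
    also have "(\<Sum>y\<in>orbit Gr \<phi> x. \<pi> y / Z x) = 1"
      using Z_pos[OF x] by (simp add: Z_def sum_divide_distrib[symmetric])
    finally show "(\<Sum>y\<in>X. gibbs_kernel Gr \<phi> X \<pi> x y) = 1" .
  next
    fix x y assume x: "x \<in> X" and y: "y \<in> orbit Gr \<phi> x"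
    show "0 < gibbs_kernel Gr \<phi> X \<pi> x y"
      using x y orbit_member[OF x y] pi_pos[OF orbit_member[OF x y]] Z_pos[OF x] by (simp add: gibbs)
  qed (fact pi_pos aperiodic)+
qed

lemma orbit_kernel_support:
  "orbit_kernel Gr \<phi> X acc x y \<noteq> 0 \<Longrightarrow> x \<in> X \<and> y \<in> orbit Gr \<phi> x"
  unfolding orbit_kernel_def by (auto simp: orbit_self split: if_splits)

lemma orbit_kernel_off_diagonal:
  "x \<in> X \<Longrightarrow> y \<in> orbit Gr \<phi> x \<Longrightarrow> y \<noteq> x \<Longrightarrow>
    orbit_kernel Gr \<phi> X acc x y = acc x y / (real (card (orbit Gr \<phi> x)) - 1)"
  unfolding orbit_kernel_def by (simp add: orbit_member)

lemma orbit_kernel_diagonal: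
  "x \<in> X \<Longrightarrow>
    orbit_kernel Gr \<phi> X acc x x = 1 - (\<Sum>z\<in>orbit Gr \<phi> x - {x}. acc x z / (real (card (orbit Gr \<phi> x)) - 1))"
  unfolding orbit_kernel_def by simp

lemma card_orbit_minus_self:
  assumes "x \<in> X"
  shows "real (card (orbit Gr \<phi> x - {x})) = real (card (orbit Gr \<phi> x)) - 1"
proof -
  have "0 < card (orbit Gr \<phi> x)"
    using finite_orbit[OF assms] orbit_self[OF assms] by (auto simp: card_gt_0_iff)
  moreover have "card (orbit Gr \<phi> x - {x}) = card (orbit Gr \<phi> x) - 1"
    using orbit_self[OF assms] by (rule card_Diff_singleton)
  ultimately show ?thesis by (simp add: of_nat_diff)
qed

lemma orbit_kernel_row_sum:
  assumes x: "x \<in> X"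
  shows "(\<Sum>y\<in>X. orbit_kernel Gr \<phi> X acc x y) = 1"
proof -
  have "(\<Sum>y\<in>X - {x}. orbit_kernel Gr \<phi> X acc x y)
      = (\<Sum>y\<in>orbit Gr \<phi> x - {x}. orbit_kernel Gr \<phi> X acc x y)"
  proof (rule sum.mono_neutral_right)
    show "orbit Gr \<phi> x - {x} \<subseteq> X - {x}" using orbit_subset[OF x] by blast
    show "\<forall>y\<in>X - {x} - (orbit Gr \<phi> x - {x}). orbit_kernel Gr \<phi> X acc x y = 0"
      using orbit_kernel_support by blast
  qed (use finite_states in simp)
  also have "\<dots> = (\<Sum>y\<in>orbit Gr \<phi> x - {x}. acc x y / (real (card (orbit Gr \<phi> x)) - 1))"
    using orbit_kernel_off_diagonal[OF x] by simp
  finally show ?thesis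
    using sum.remove[OF finite_states x, of "orbit_kernel Gr \<phi> X acc x"] orbit_kernel_diagonal[OF x]
    by simp
qed

lemma orbit_kernel_nonneg:
  assumes "\<And>x y. x \<in> X \<Longrightarrow> y \<in> X \<Longrightarrow> 0 \<le> acc x y"
    and "\<And>x y. x \<in> X \<Longrightarrow> y \<in> X \<Longrightarrow> acc x y \<le> 1"
  shows "0 \<le> orbit_kernel Gr \<phi> X acc x y"
proof (cases "x \<in> X \<and> y \<in> orbit Gr \<phi> x")
  case False
  then have "orbit_kernel Gr \<phi> X acc x y = 0" using orbit_kernel_support by blast
  then show ?thesis by simp
next
  case True
  then have x: "x \<in> X" and y: "y \<in> orbit Gr \<phi> x" by auto
  define c where "c = real (card (orbit Gr \<phi> x)) - 1"
  have "0 \<le> c" using card_orbit_minus_self[OF x] unfolding c_def by linarith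
  show ?thesis
  proof (cases "y = x")
    case True
    have "(\<Sum>z\<in>orbit Gr \<phi> x - {x}. acc x z / c) \<le> (\<Sum>z\<in>orbit Gr \<phi> x - {x}. 1 / c)"
      using assms x orbit_member[OF x] \<open>0 \<le> c\<close> by (intro sum_mono divide_right_mono) auto
    also have "\<dots> = c / c" using card_orbit_minus_self[OF x] unfolding c_def by simp
    also have "\<dots> \<le> 1" by (cases "c = 0") auto
    finally show ?thesis using orbit_kernel_diagonal[OF x] True unfolding c_def by simp
  next
    case False
    then show ?thesis
      using orbit_kernel_off_diagonal[OF x y] assms(1)[OF x orbit_member[OF x y]] \<open>0 \<le> c\<close>
      unfolding c_def by simp
  qed
qed

lemma orbit_kernel_off_diagonal_pos:
  assumes x: "x \<in> X" and y: "y \<in> orbit Gr \<phi> x" and "y \<noteq> x" and "0 < acc x y"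
  shows "0 < orbit_kernel Gr \<phi> X acc x y"
proof -
  have "{x, y} \<subseteq> orbit Gr \<phi> x" using orbit_self[OF x] y by blast
  then have "card {x, y} \<le> card (orbit Gr \<phi> x)" by (rule card_mono[OF finite_orbit[OF x]])
  then have "2 \<le> card (orbit Gr \<phi> x)" using \<open>y \<noteq> x\<close> by simp
  then show ?thesis using orbit_kernel_off_diagonal[OF x y \<open>y \<noteq> x\<close>] \<open>0 < acc x y\<close> by simp
qed

lemma orbit_kernel_reversible:
  assumes balance: "\<And>x y. x \<in> X \<Longrightarrow> y \<in> X \<Longrightarrow> \<pi> x * acc x y = \<pi> y * acc y x"
  shows "\<pi> x * orbit_kernel Gr \<phi> X acc x y = \<pi> y * orbit_kernel Gr \<phi> X acc y x"
proof (cases "x \<noteq> y \<and> x \<in> X \<and> y \<in> orbit Gr \<phi> x")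
  case True
  then have x: "x \<in> X" and y: "y \<in> orbit Gr \<phi> x" and "y \<noteq> x" by auto
  have y_X: "y \<in> X" and x_y: "x \<in> orbit Gr \<phi> y" and same: "orbit Gr \<phi> y = orbit Gr \<phi> x"
    by (fact orbit_member[OF x y] orbit_sym[OF x y] orbit_eq[OF x y])+
  show ?thesis
    using orbit_kernel_off_diagonal[OF x y \<open>y \<noteq> x\<close>] orbit_kernel_off_diagonal[OF y_X x_y] True
    by (simp only: same times_divide_eq_right balance[OF x y_X]) simp
next
  case False
  have "orbit_kernel Gr \<phi> X acc x y = 0 \<and> orbit_kernel Gr \<phi> X acc y x = 0 \<or> x = y"
    using False orbit_kernel_support orbit_member orbit_sym by blast
  then show ?thesis by auto
qed

lemma orbit_kernel_reversible_block_kernel: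
  assumes pi_pos: "\<And>x. x \<in> X \<Longrightarrow> 0 < \<pi> x"
    and acc_pos: "\<And>x y. x \<in> X \<Longrightarrow> y \<in> X \<Longrightarrow> 0 < acc x y"
    and acc_le_one: "\<And>x y. x \<in> X \<Longrightarrow> y \<in> X \<Longrightarrow> acc x y \<le> 1"
    and balance: "\<And>x y. x \<in> X \<Longrightarrow> y \<in> X \<Longrightarrow> \<pi> x * acc x y = \<pi> y * acc y x"
    and aperiodic: "\<And>x. x \<in> X \<Longrightarrow> aperiodic_block (orbit Gr \<phi> x) (orbit_kernel Gr \<phi> X acc)"
  shows "reversible_block_kernel X (orbit Gr \<phi>) \<pi> (orbit_kernel Gr \<phi> X acc)"
proof (rule reversible_block_kernelI)
  fix x y
  show "0 \<le> orbit_kernel Gr \<phi> X acc x y"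
    using acc_pos acc_le_one by (intro orbit_kernel_nonneg) (auto intro: less_imp_le)
  show "\<pi> x * orbit_kernel Gr \<phi> X acc x y = \<pi> y * orbit_kernel Gr \<phi> X acc y x"
    using balance by (rule orbit_kernel_reversible)
next
  fix x y assume "x \<in> X" "y \<in> orbit Gr \<phi> x" "y \<noteq> x"
  then show "0 < orbit_kernel Gr \<phi> X acc x y"
    using acc_pos orbit_member by (intro orbit_kernel_off_diagonal_pos) auto
qed (use pi_pos orbit_kernel_support orbit_kernel_row_sum aperiodic in auto)

lemma mh_reversible_block_kernel:
  assumes pi_pos: "\<And>x. x \<in> X \<Longrightarrow> 0 < \<pi> x"
    and aperiodic: "\<And>x. x \<in> X \<Longrightarrow> aperiodic_block (orbit Gr \<phi> x) (mh_kernel Gr \<phi> X \<pi>)"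
  shows "reversible_block_kernel X (orbit Gr \<phi>) \<pi> (mh_kernel Gr \<phi> X \<pi>)"
  unfolding mh_kernel_def
proof (rule orbit_kernel_reversible_block_kernel)
  fix x y assume "x \<in> X" "y \<in> X"
  then have "0 < \<pi> x" "0 < \<pi> y" using pi_pos by auto
  then show "0 < min 1 (\<pi> y / \<pi> x)" and "min 1 (\<pi> y / \<pi> x) \<le> 1"
    and "\<pi> x * min 1 (\<pi> y / \<pi> x) = \<pi> y * min 1 (\<pi> x / \<pi> y)"
    by (auto simp: min_def field_simps)
qed (use pi_pos aperiodic in \<open>simp_all add: mh_kernel_def\<close>)

lemma barker_reversible_block_kernel:
  assumes pi_pos: "\<And>x. x \<in> X \<Longrightarrow> 0 < \<pi> x"
    and aperiodic: "\<And>x. x \<in> X \<Longrightarrow> aperiodic_block (orbit Gr \<phi> x) (barker_kernel Gr \<phi> X \<pi>)"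
  shows "reversible_block_kernel X (orbit Gr \<phi>) \<pi> (barker_kernel Gr \<phi> X \<pi>)"
  unfolding barker_kernel_def
proof (rule orbit_kernel_reversible_block_kernel)
  fix x y assume "x \<in> X" "y \<in> X"
  then have "0 < \<pi> x" "0 < \<pi> y" using pi_pos by auto
  then show "0 < \<pi> y / (\<pi> x + \<pi> y)" and "\<pi> y / (\<pi> x + \<pi> y) \<le> 1"
    and "\<pi> x * (\<pi> y / (\<pi> x + \<pi> y)) = \<pi> y * (\<pi> x / (\<pi> y + \<pi> x))"
    by (simp_all add: add.commute)
qed (use pi_pos aperiodic in \<open>simp_all add: barker_kernel_def\<close>)

end

theorem proposition5p1:
  fixes Gr :: "('g, 'b) monoid_scheme" and \<phi> :: "'g \<Rightarrow> 'a \<Rightarrow> 'a"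
    and X :: "'a set" and \<pi> :: "'a \<Rightarrow> real"
  assumes "finite X"
    and "\<forall>x\<in>X. \<pi> x > 0"
    and "(\<Sum>x\<in>X. \<pi> x) = 1"
    and "group_action Gr X \<phi>"
    and "\<forall>x\<in>X. aperiodic_block (orbit Gr \<phi> x) (gibbs_kernel Gr \<phi> X \<pi>)"
    and "\<forall>x\<in>X. aperiodic_block (orbit Gr \<phi> x) (mh_kernel Gr \<phi> X \<pi>)"
    and "\<forall>x\<in>X. aperiodic_block (orbit Gr \<phi> x) (barker_kernel Gr \<phi> X \<pi>)"
  shows "invariant_set X \<pi> (gibbs_kernel Gr \<phi> X \<pi>) = invariant_set X \<pi> (mh_kernel Gr \<phi> X \<pi>)
       \<and> invariant_set X \<pi> (mh_kernel Gr \<phi> X \<pi>) = invariant_set X \<pi> (barker_kernel Gr \<phi> X \<pi>)"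
proof -
  have blocks: "orbit_blocks X (orbit Gr \<phi>)"
    using assms(4,1) by (rule group_action_orbit_blocks)
  interpret gibbs: reversible_block_kernel X "orbit Gr \<phi>" \<pi> "gibbs_kernel Gr \<phi> X \<pi>"
    by (rule gibbs_reversible_block_kernel[OF blocks]) (use assms(2,5) in auto)
  interpret mh: reversible_block_kernel X "orbit Gr \<phi>" \<pi> "mh_kernel Gr \<phi> X \<pi>"
    by (rule mh_reversible_block_kernel[OF blocks]) (use assms(2,6) in auto)
  interpret barker: reversible_block_kernel X "orbit Gr \<phi>" \<pi> "barker_kernel Gr \<phi> X \<pi>"
    by (rule barker_reversible_block_kernel[OF blocks]) (use assms(2,7) in auto)
  show ?thesis
    by (simp only: gibbs.invariant_set_eq_proportional mh.invariant_set_eq_proportional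
        barker.invariant_set_eq_proportional)
qed

end
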